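(* Let $G=\mathbb{R}\times\mathbb{C}$ be the model of $\widetilde{\mathrm{SL}}_2(\mathbb{R})$ described below, let $\eta>0$ and $C^+_\eta=\{(\xi,\zeta)\in\mathbb{R}\times\mathbb{C}:\xi^2\ge(\eta+1)|\zeta|^2,\ \xi\ge 0\}$, and let $\tau=dc$ be the differential of the first coordinate. Then for every $(c,w)\in G$ and every nonzero $v\in(L_{(c,w)})_*C^+_\eta$ we have $\tau_{(c,w)}(v)>0$, and there are constants $A,B>0$ (depending only on $\eta$) such that $\dfrac{|v|}{\tau_{(c,w)}(v)}\le A+B|w|$ for all such $(c,w)$ and $v$, where $|v|$ is the Euclidean norm on $\mathbb{R}\times\mathbb{C}\cong\mathbb{R}^3$.
   Context: $G=\mathbb{R}\times\mathbb{C}$ with identity $(0,0)$ and multiplication $(c_1,w_1)\cdot(c_2,w_2)=(c,w)$, $c=c_1+c_2+\arctan\frac{\operatorname{Im}(w_1\bar w_2e^{-i(c_1+c_2)})}{\sqrt{1+|w_1|^2}\sqrt{1+|w_2|^2}+\operatorname{Re}(w_1\bar w_2e^{-i(c_1+c_2)})}$, $w=w_2\sqrt{1+|w_1|^2}e^{ic_1}+w_1\sqrt{1+|w_2|^2}e^{-ic_2}$; this is the universal cover of $\mathrm{SU}_{1,1}\cong\mathrm{SL}_2(\mathbb{R})$. $L_{(c,w)}$ is left multiplication and $(L_{(c,w)})_*$ its differential at the identity, where tangent spaces are identified with $\mathbb{R}\times\mathbb{C}$ via the coordinates. *)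

theory Defs
  imports "HOL-Analysis.Analysis"
begin

text \<open>The model of the universal cover of SU(1,1) on real x complex.\<close>

definition gmul :: "real \<times> complex \<Rightarrow> real \<times> complex \<Rightarrow> real \<times> complex" where
  "gmul g h = (case g of (c1, w1) \<Rightarrow> case h of (c2, w2) \<Rightarrow>
     (let z = w1 * cnj w2 * cis (- (c1 + c2)) in
       (c1 + c2 + arctan (Im z / (sqrt (1 + (cmod w1)\<^sup>2) * sqrt (1 + (cmod w2)\<^sup>2) + Re z)),
        w2 * complex_of_real (sqrt (1 + (cmod w1)\<^sup>2)) * cis c1
        + w1 * complex_of_real (sqrt (1 + (cmod w2)\<^sup>2)) * cis (- c2))))"

definition Lstar :: "real \<times> complex \<Rightarrow> real \<times> complex \<Rightarrow> real \<times> complex" where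
  "Lstar g = frechet_derivative (gmul g) (at (0, 0))"

definition Cplus :: "real \<Rightarrow> (real \<times> complex) set" where
  "Cplus \<eta> = {(\<xi>, \<zeta>). \<xi>\<^sup>2 \<ge> (\<eta> + 1) * (cmod \<zeta>)\<^sup>2 \<and> \<xi> \<ge> 0}"

definition tau :: "real \<times> complex \<Rightarrow> real \<times> complex \<Rightarrow> real" where
  "tau g v = fst v"

end

theory Submission
  imports Defs
begin

text \<open>
  At the identity, left translation by \<open>(c, w)\<close> has the differential
  \<open>(\<xi>, \<zeta>) \<mapsto> (\<xi> + Im (w cnj(\<zeta>) e^(-ic)) / s, s \<zeta> e^(ic) - i w \<xi>)\<close>, where
  \<open>s = sqrt (1 + |w|^2) \<ge> |w|\<close>. So the first coordinate differs from \<open>\<xi>\<close> by at most \<open>|\<zeta>|\<close>,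
  while the second has modulus at most \<open>(1 + |w|) |\<zeta>| + |w| |\<xi>|\<close>. On the cone
  \<open>|\<zeta>| \<le> \<xi> / sqrt (1 + \<eta>)\<close>, hence \<open>\<tau> \<ge> k \<xi>\<close> with \<open>k = 1 - 1 / sqrt (1 + \<eta>) > 0\<close> and
  \<open>|v| \<le> (3 + 2 |w|) \<xi>\<close>, which gives \<open>A = 3 / k\<close> and \<open>B = 2 / k\<close>.
\<close>

lemma has_derivative_sqrt_one_plus_norm_sq [derivative_intros]:
  fixes f :: "_ \<Rightarrow> 'a::real_inner"
  assumes "(f has_derivative f') (at x within S)"
  shows "((\<lambda>x. sqrt (1 + (norm (f x))\<^sup>2)) has_derivative
           (\<lambda>h. (f x \<bullet> f' h) / sqrt (1 + (norm (f x))\<^sup>2))) (at x within S)"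
  unfolding power2_norm_eq_inner
  by (auto intro!: derivative_eq_intros assms simp: add_pos_nonneg inner_commute field_simps)

lemma has_derivative_gmul:
  "(gmul (c, w) has_derivative
     (\<lambda>(\<xi>, \<zeta>). (\<xi> + Im (w * cnj \<zeta> * cis (- c)) / sqrt (1 + (cmod w)\<^sup>2),
                 \<zeta> * complex_of_real (sqrt (1 + (cmod w)\<^sup>2)) * cis c - \<i> * w * complex_of_real \<xi>)))
     (at (0, 0))"
proof -
  have gmul_eq: "gmul (c, w) = (\<lambda>h. (c + fst h + arctan (Im (w * cnj (snd h) * cis (- (c + fst h)))
       / (sqrt (1 + (cmod w)\<^sup>2) * sqrt (1 + (cmod (snd h))\<^sup>2) + Re (w * cnj (snd h) * cis (- (c + fst h))))),
     snd h * complex_of_real (sqrt (1 + (cmod w)\<^sup>2)) * cis c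
        + w * complex_of_real (sqrt (1 + (cmod (snd h))\<^sup>2)) * cis (- fst h)))"
    by (auto simp: gmul_def fun_eq_iff Let_def)
  \<comment> \<open>Given explicitly: otherwise \<open>derivative_eq_intros\<close> differentiates the non-smooth \<open>cmod\<close>.\<close>
  have sqrt_norm_snd_deriv: "((\<lambda>h::real \<times> complex. sqrt (1 + (cmod (snd h))\<^sup>2)) has_derivative (\<lambda>_. 0)) (at (0, 0))"
    using has_derivative_sqrt_one_plus_norm_sq[OF has_derivative_snd[OF has_derivative_ident], of "(0, 0)" UNIV]
    by simp
  have nz: "1 + (cmod w)\<^sup>2 \<noteq> 0"
    using zero_le_power2[of "cmod w"] by linarith
  show ?thesis
    unfolding gmul_eq
    by (rule has_derivative_eq_rhs, (rule sqrt_norm_snd_deriv derivative_eq_intros refl | simp add: nz)+)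
      (auto simp: fun_eq_iff scaleR_conv_of_real)
qed

lemma Lstar_apply:
  "Lstar (c, w) (\<xi>, \<zeta>) =
     (\<xi> + Im (w * cnj \<zeta> * cis (- c)) / sqrt (1 + (cmod w)\<^sup>2),
      \<zeta> * complex_of_real (sqrt (1 + (cmod w)\<^sup>2)) * cis c - \<i> * w * complex_of_real \<xi>)"
  unfolding Lstar_def frechet_derivative_at[OF has_derivative_gmul, symmetric] by simp

lemma Lstar_zero: "Lstar g 0 = 0"
  by (cases g) (simp add: zero_prod_def Lstar_apply)

lemma abs_fst_Lstar_minus_le: "\<bar>fst (Lstar (c, w) (\<xi>, \<zeta>)) - \<xi>\<bar> \<le> cmod \<zeta>"
proof -
  define s where "s = sqrt (1 + (cmod w)\<^sup>2)"
  have "s > 0"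
    unfolding s_def by (simp add: add_pos_nonneg)
  have "cmod w \<le> s"
    unfolding s_def by (rule real_le_rsqrt) simp
  have "\<bar>Im (w * cnj \<zeta> * cis (- c))\<bar> \<le> cmod w * cmod \<zeta>"
    using abs_Im_le_cmod[of "w * cnj \<zeta> * cis (- c)"] by (simp add: norm_mult)
  also have "\<dots> \<le> s * cmod \<zeta>"
    using \<open>cmod w \<le> s\<close> by (simp add: mult_right_mono)
  finally have "\<bar>Im (w * cnj \<zeta> * cis (- c)) / s\<bar> \<le> cmod \<zeta>"
    using \<open>s > 0\<close> by (simp add: abs_div pos_divide_le_eq mult.commute)
  then show ?thesis
    by (simp add: Lstar_apply s_def)
qed

lemma norm_snd_Lstar_le:
  "cmod (snd (Lstar (c, w) (\<xi>, \<zeta>))) \<le> (1 + cmod w) * cmod \<zeta> + cmod w * \<bar>\<xi>\<bar>"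
proof -
  define s where "s = sqrt (1 + (cmod w)\<^sup>2)"
  have "s \<le> 1 + cmod w"
    unfolding s_def by (rule real_sqrt_le_iff[THEN iffD2, of _ "(1 + cmod w)\<^sup>2", simplified])
      (simp add: power2_eq_square algebra_simps)
  moreover have "s \<ge> 0"
    by (simp add: s_def)
  ultimately have "cmod \<zeta> * s \<le> (1 + cmod w) * cmod \<zeta>"
    by (metis mult.commute mult_right_mono norm_ge_zero)
  moreover have "cmod (snd (Lstar (c, w) (\<xi>, \<zeta>))) \<le> cmod \<zeta> * s + cmod w * \<bar>\<xi>\<bar>"
    using norm_triangle_ineq4[of "\<zeta> * complex_of_real s * cis c" "\<i> * w * complex_of_real \<xi>"] \<open>s \<ge> 0\<close>
    by (simp add: Lstar_apply s_def norm_mult)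
  ultimately show ?thesis
    by linarith
qed

lemma Cplus_norm_le:
  assumes "(\<xi>, \<zeta>) \<in> Cplus \<eta>" and "\<eta> \<ge> -1"
  shows "sqrt (1 + \<eta>) * cmod \<zeta> \<le> \<xi>"
proof -
  have "sqrt (1 + \<eta>) * cmod \<zeta> = sqrt ((\<eta> + 1) * (cmod \<zeta>)\<^sup>2)"
    by (simp add: real_sqrt_mult add.commute)
  also have "\<dots> \<le> sqrt (\<xi>\<^sup>2)"
    using assms(1) by (intro real_sqrt_le_mono) (simp add: Cplus_def)
  also have "\<dots> = \<xi>"
    using assms(1) by (simp add: Cplus_def)
  finally show ?thesis .
qed

lemma Cplus_fst_pos:
  assumes "(\<xi>, \<zeta>) \<in> Cplus \<eta>" and "\<eta> > -1" and "(\<xi>, \<zeta>) \<noteq> 0"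
  shows "\<xi> > 0"
proof (rule ccontr)
  assume "\<not> \<xi> > 0"
  with assms(1) have "\<xi> = 0"
    by (simp add: Cplus_def)
  moreover from assms(2) have "sqrt (1 + \<eta>) > 0"
    by simp
  ultimately have "\<zeta> = 0"
    using Cplus_norm_le[OF assms(1)] assms(2) by (simp add: mult_le_0_iff)
  with \<open>\<xi> = 0\<close> assms(3) show False
    by (simp add: zero_prod_def)
qed

lemma fst_Lstar_Cplus_ge:
  assumes "(\<xi>, \<zeta>) \<in> Cplus \<eta>" and "\<eta> > 0"
  shows "(1 - 1 / sqrt (1 + \<eta>)) * \<xi> \<le> fst (Lstar (c, w) (\<xi>, \<zeta>))"
proof -
  have "sqrt (1 + \<eta>) > 0"
    using assms(2) by simp
  with Cplus_norm_le[OF assms(1)] assms(2) have "cmod \<zeta> \<le> \<xi> / sqrt (1 + \<eta>)"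
    by (simp add: pos_le_divide_eq mult.commute)
  with abs_fst_Lstar_minus_le[of c w \<xi> \<zeta>] show ?thesis
    by (simp add: algebra_simps)
qed

lemma norm_Lstar_Cplus_le:
  assumes "(\<xi>, \<zeta>) \<in> Cplus \<eta>" and "\<eta> \<ge> 0"
  shows "norm (Lstar (c, w) (\<xi>, \<zeta>)) \<le> (3 + 2 * cmod w) * \<xi>"
proof -
  have "\<xi> \<ge> 0"
    using assms(1) by (simp add: Cplus_def)
  have "cmod \<zeta> \<le> sqrt (1 + \<eta>) * cmod \<zeta>"
    using assms(2) by (simp add: mult_le_cancel_right1)
  also have "\<dots> \<le> \<xi>"
    using Cplus_norm_le[OF assms(1)] assms(2) by simp
  finally have "cmod \<zeta> \<le> \<xi>" .
  have "norm (Lstar (c, w) (\<xi>, \<zeta>))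
      \<le> norm (fst (Lstar (c, w) (\<xi>, \<zeta>))) + cmod (snd (Lstar (c, w) (\<xi>, \<zeta>)))"
    using norm_Pair_le[of "fst (Lstar (c, w) (\<xi>, \<zeta>))" "snd (Lstar (c, w) (\<xi>, \<zeta>))"] by simp
  also have "\<dots> \<le> (\<xi> + cmod \<zeta>) + ((1 + cmod w) * cmod \<zeta> + cmod w * \<xi>)"
    using abs_fst_Lstar_minus_le[of c w \<xi> \<zeta>] norm_snd_Lstar_le[of c w \<xi> \<zeta>] \<open>\<xi> \<ge> 0\<close>
    by simp
  also have "\<dots> \<le> (3 + 2 * cmod w) * \<xi>"
    using \<open>cmod \<zeta> \<le> \<xi>\<close> mult_left_mono[OF \<open>cmod \<zeta> \<le> \<xi>\<close>, of "cmod w"]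
    by (simp add: algebra_simps)
  finally show ?thesis .
qed

theorem mainTheorem9:
  fixes \<eta> :: real
  assumes "\<eta> > 0"
  shows "(\<forall>c w v. v \<in> Lstar (c, w) ` Cplus \<eta> \<and> v \<noteq> 0 \<longrightarrow> tau (c, w) v > 0)
       \<and> (\<exists>A > 0. \<exists>B > 0. \<forall>c w v. v \<in> Lstar (c, w) ` Cplus \<eta> \<and> v \<noteq> 0 \<longrightarrow>
             norm v / tau (c, w) v \<le> A + B * cmod w)"
proof -
  define k where "k = 1 - 1 / sqrt (1 + \<eta>)"
  have "k > 0"
    using assms by (simp add: k_def)
  have bounds: "tau (c, w) v > 0 \<and> norm v / tau (c, w) v \<le> 3 / k + 2 / k * cmod w"
    if "v \<in> Lstar (c, w) ` Cplus \<eta>" and "v \<noteq> 0" for c w v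
  proof -
    from that obtain \<xi> \<zeta> where u: "(\<xi>, \<zeta>) \<in> Cplus \<eta>" and v: "v = Lstar (c, w) (\<xi>, \<zeta>)"
      by auto
    with \<open>v \<noteq> 0\<close> have "\<xi> > 0"
      using Cplus_fst_pos[OF u] assms Lstar_zero by force
    have tau_ge: "k * \<xi> \<le> tau (c, w) v"
      using fst_Lstar_Cplus_ge[OF u assms] by (simp add: v tau_def k_def)
    with mult_pos_pos[OF \<open>k > 0\<close> \<open>\<xi> > 0\<close>] have "tau (c, w) v > 0"
      by linarith
    have "norm v / tau (c, w) v \<le> (3 + 2 * cmod w) * \<xi> / (k * \<xi>)"
      using norm_Lstar_Cplus_le[OF u] assms tau_ge \<open>k > 0\<close> \<open>\<xi> > 0\<close>
      by (intro frac_le) (auto simp: v)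
    also have "\<dots> = 3 / k + 2 / k * cmod w"
      using \<open>k > 0\<close> \<open>\<xi> > 0\<close> by (simp add: field_simps)
    finally show ?thesis
      using \<open>tau (c, w) v > 0\<close> by simp
  qed
  then show ?thesis
    using \<open>k > 0\<close> by (intro conjI exI[of _ "3 / k"] exI[of _ "2 / k"]) auto
qed

end
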